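(* The logic $\mathsf{iCC}\oplus((p\wedge(p\mathrel{\Box\!\!\!\rightarrow} q))\to q)$ of intuitionistic cautious knowledge relative to information is sound and complete with respect to the class of cautious conditional frames that satisfy: if $x\in a$ then $x\in{\uparrow}R_a[x]$, for all worlds $x$ and upsets $a$.
   Context: Formulas: $\phi ::= p\mid\bot\mid\phi\wedge\phi\mid\phi\vee\phi\mid\phi\to\phi\mid\phi\mathrel{\Box\!\!\!\rightarrow}\phi$. $\mathsf{ICK}\oplus\Gamma$ is the smallest set containing intuitionistic propositional logic, $\Gamma$, $(p\mathrel{\Box\!\!\!\rightarrow}(q\wedge r))\leftrightarrow((p\mathrel{\Box\!\!\!\rightarrow} q)\wedge(p\mathrel{\Box\!\!\!\rightarrow} r))$ and $(p\mathrel{\Box\!\!\!\rightarrow}\top)\leftrightarrow\top$, closed under uniform substitution, modus ponens and congruence rules for both arguments of $\mathrel{\Box\!\!\!\rightarrow}$. $\mathsf{iCC}=\mathsf{ICK}\oplus(p\mathrel{\Box\!\!\!\rightarrow} p)\oplus(((p\mathrel{\Box\!\!\!\rightarrow} q)\wedge((p\wedge q)\mathrel{\Box\!\!\!\rightarrow} r))\to(p\mathrel{\Box\!\!\!\rightarrow} r))\oplus(((p\mathrel{\Box\!\!\!\rightarrow} q)\wedge(p\mathrel{\Box\!\!\!\rightarrow} r))\to((p\wedge q)\mathrel{\Box\!\!\!\rightarrow} r))$. A conditional frame is $(X,\leq,\mathcal{R})$, $(X,\leq)$ a nonempty preorder, $\mathcal{R}=\{R_a\mid a\text{ an upset}\}$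 with $(\leq\circ R_a)\subseteq(R_a\circ\leq)$; $x\models\phi\mathrel{\Box\!\!\!\rightarrow}\psi$ iff every $y$ with $xR_{V(\phi)}y$ satisfies $\psi$. A cautious conditional frame satisfies $R_a[x]\subseteq a$ and ($R_a[x]\subseteq b\subseteq a$ implies ${\uparrow}R_a[x]={\uparrow}R_b[x]$) for all $x$ and upsets $a,b$. *)

theory Defs
  imports Main
begin

datatype fm = Var nat | Bot | And fm fm | Or fm fm | Imp fm fm | Cond fm fm

definition Top :: fm where "Top = Imp Bot Bot"
definition Iff :: "fm \<Rightarrow> fm \<Rightarrow> fm" where "Iff a b = And (Imp a b) (Imp b a)"

fun subst :: "(nat \<Rightarrow> fm) \<Rightarrow> fm \<Rightarrow> fm" where
  "subst \<sigma> (Var p) = \<sigma> p"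
| "subst \<sigma> Bot = Bot"
| "subst \<sigma> (And a b) = And (subst \<sigma> a) (subst \<sigma> b)"
| "subst \<sigma> (Or a b) = Or (subst \<sigma> a) (subst \<sigma> b)"
| "subst \<sigma> (Imp a b) = Imp (subst \<sigma> a) (subst \<sigma> b)"
| "subst \<sigma> (Cond a b) = Cond (subst \<sigma> a) (subst \<sigma> b)"

abbreviation "vp \<equiv> Var 0"
abbreviation "vq \<equiv> Var 1"
abbreviation "vr \<equiv> Var 2"

inductive_set IPC :: "fm set" where
  K: "Imp a (Imp b a) \<in> IPC"
| S: "Imp (Imp a (Imp b c)) (Imp (Imp a b) (Imp a c)) \<in> IPC"
| C1: "Imp (And a b) a \<in> IPC"
| C2: "Imp (And a b) b \<in> IPC"
| C3: "Imp a (Imp b (And a b)) \<in> IPC"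
| D1: "Imp a (Or a b) \<in> IPC"
| D2: "Imp b (Or a b) \<in> IPC"
| D3: "Imp (Imp a c) (Imp (Imp b c) (Imp (Or a b) c)) \<in> IPC"
| EFQ: "Imp Bot a \<in> IPC"
| MP: "Imp a b \<in> IPC \<Longrightarrow> a \<in> IPC \<Longrightarrow> b \<in> IPC"

inductive_set ICK :: "fm set \<Rightarrow> fm set" for \<Gamma> :: "fm set" where
  ipc: "a \<in> IPC \<Longrightarrow> a \<in> ICK \<Gamma>"
| extra: "a \<in> \<Gamma> \<Longrightarrow> a \<in> ICK \<Gamma>"
| ax_and: "Iff (Cond vp (And vq vr)) (And (Cond vp vq) (Cond vp vr)) \<in> ICK \<Gamma>"
| ax_top: "Iff (Cond vp Top) Top \<in> ICK \<Gamma>"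
| sub: "a \<in> ICK \<Gamma> \<Longrightarrow> subst \<sigma> a \<in> ICK \<Gamma>"
| mp: "Imp a b \<in> ICK \<Gamma> \<Longrightarrow> a \<in> ICK \<Gamma> \<Longrightarrow> b \<in> ICK \<Gamma>"
| cong_l: "Iff a b \<in> ICK \<Gamma> \<Longrightarrow> Iff (Cond a c) (Cond b c) \<in> ICK \<Gamma>"
| cong_r: "Iff a b \<in> ICK \<Gamma> \<Longrightarrow> Iff (Cond c a) (Cond c b) \<in> ICK \<Gamma>"

definition iCC_axioms :: "fm set" where
  "iCC_axioms = {Cond vp vp,
     Imp (And (Cond vp vq) (Cond (And vp vq) vr)) (Cond vp vr),
     Imp (And (Cond vp vq) (Cond vp vr)) (Cond (And vp vq) vr)}"

definition iCCT :: "fm set" where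
  "iCCT = ICK (iCC_axioms \<union> {Imp (And vp (Cond vp vq)) vq})"

definition upset :: "'w set \<Rightarrow> ('w \<Rightarrow> 'w \<Rightarrow> bool) \<Rightarrow> 'w set \<Rightarrow> bool" where
  "upset X le a \<longleftrightarrow> a \<subseteq> X \<and> (\<forall>x y. x \<in> a \<longrightarrow> le x y \<longrightarrow> y \<in> a)"

definition up :: "('w \<Rightarrow> 'w \<Rightarrow> bool) \<Rightarrow> 'w set \<Rightarrow> 'w set" where
  "up le S = {y. \<exists>x\<in>S. le x y}"

definition Rimg :: "('w set \<Rightarrow> 'w \<Rightarrow> 'w \<Rightarrow> bool) \<Rightarrow> 'w set \<Rightarrow> 'w \<Rightarrow> 'w set" where
  "Rimg R a x = {y. R a x y}"

text \<open>Conditional frame (X, \<le>, {R_a | a upset}); the relations R a are only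
  constrained for upsets a. The condition (\<le> \<circ> R_a) \<subseteq> (R_a \<circ> \<le>) is read
  diagrammatically: x \<le> y, y R_a z implies x R_a w, w \<le> z for some w.\<close>
definition cframe :: "'w set \<Rightarrow> ('w \<Rightarrow> 'w \<Rightarrow> bool) \<Rightarrow> ('w set \<Rightarrow> 'w \<Rightarrow> 'w \<Rightarrow> bool) \<Rightarrow> bool" where
  "cframe X le R \<longleftrightarrow>
     X \<noteq> {} \<and>
     (\<forall>x y. le x y \<longrightarrow> x \<in> X \<and> y \<in> X) \<and>
     (\<forall>x\<in>X. le x x) \<and>
     (\<forall>x y z. le x y \<longrightarrow> le y z \<longrightarrow> le x z) \<and>
     (\<forall>a. upset X le a \<longrightarrow>
        (\<forall>x y. R a x y \<longrightarrow> x \<in> X \<and> y \<in> X) \<and>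
        (\<forall>x y z. le x y \<longrightarrow> R a y z \<longrightarrow> (\<exists>w. R a x w \<and> le w z)))"

definition cautious_frame :: "'w set \<Rightarrow> ('w \<Rightarrow> 'w \<Rightarrow> bool) \<Rightarrow> ('w set \<Rightarrow> 'w \<Rightarrow> 'w \<Rightarrow> bool) \<Rightarrow> bool" where
  "cautious_frame X le R \<longleftrightarrow> cframe X le R \<and>
     (\<forall>x\<in>X. \<forall>a b. upset X le a \<longrightarrow> upset X le b \<longrightarrow>
        Rimg R a x \<subseteq> a \<and>
        (Rimg R a x \<subseteq> b \<and> b \<subseteq> a \<longrightarrow> up le (Rimg R a x) = up le (Rimg R b x)))"

definition reflexive_cond :: "'w set \<Rightarrow> ('w \<Rightarrow> 'w \<Rightarrow> bool) \<Rightarrow> ('w set \<Rightarrow> 'w \<Rightarrow> 'w \<Rightarrow> bool) \<Rightarrow> bool" where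
  "reflexive_cond X le R \<longleftrightarrow>
     (\<forall>x\<in>X. \<forall>a. upset X le a \<longrightarrow> x \<in> a \<longrightarrow> x \<in> up le (Rimg R a x))"

definition valuation :: "'w set \<Rightarrow> ('w \<Rightarrow> 'w \<Rightarrow> bool) \<Rightarrow> (nat \<Rightarrow> 'w set) \<Rightarrow> bool" where
  "valuation X le V \<longleftrightarrow> (\<forall>p. upset X le (V p))"

fun sat :: "'w set \<Rightarrow> ('w \<Rightarrow> 'w \<Rightarrow> bool) \<Rightarrow> ('w set \<Rightarrow> 'w \<Rightarrow> 'w \<Rightarrow> bool) \<Rightarrow> (nat \<Rightarrow> 'w set) \<Rightarrow> 'w \<Rightarrow> fm \<Rightarrow> bool" where
  "sat X le R V x (Var p) \<longleftrightarrow> x \<in> V p"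
| "sat X le R V x Bot \<longleftrightarrow> False"
| "sat X le R V x (And a b) \<longleftrightarrow> sat X le R V x a \<and> sat X le R V x b"
| "sat X le R V x (Or a b) \<longleftrightarrow> sat X le R V x a \<or> sat X le R V x b"
| "sat X le R V x (Imp a b) \<longleftrightarrow> (\<forall>y\<in>X. le x y \<longrightarrow> sat X le R V y a \<longrightarrow> sat X le R V y b)"
| "sat X le R V x (Cond a b) \<longleftrightarrow>
     (\<forall>y. R {z \<in> X. sat X le R V z a} x y \<longrightarrow> sat X le R V y b)"

definition valid_frame :: "'w set \<Rightarrow> ('w \<Rightarrow> 'w \<Rightarrow> bool) \<Rightarrow> ('w set \<Rightarrow> 'w \<Rightarrow> 'w \<Rightarrow> bool) \<Rightarrow> fm \<Rightarrow> bool" where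
  "valid_frame X le R \<phi> \<longleftrightarrow> (\<forall>V. valuation X le V \<longrightarrow> (\<forall>x\<in>X. sat X le R V x \<phi>))"

definition valid_class :: "'w itself \<Rightarrow> fm \<Rightarrow> bool" where
  "valid_class _ \<phi> \<longleftrightarrow>
     (\<forall>(X :: 'w set) le R. cautious_frame X le R \<longrightarrow> reflexive_cond X le R \<longrightarrow> valid_frame X le R \<phi>)"

end

theory Submission
  imports Defs
begin

(* Soundness. Truth sets are upsets, so a \<box>\<rightarrow> b holds at x iff b holds on the upward closure
  of R_|a|[x]. When a \<box>\<rightarrow> b holds at x, cautiousness gives R_|a|[x] \<subseteq> |a \<and> b| \<subseteq> |a| and
  hence equal closures for |a| and |a \<and> b|: this validates cut and cautious monotonicity. The
  extra frame condition puts x into the closure of R_|a|[x] when x \<in> |a|, validating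
  (p \<and> (p \<box>\<rightarrow> q)) \<rightarrow> q.

  Completeness. Canonical worlds are prime theories. A formula a anchors a set A of worlds
  at x if A \<subseteq> |a| and A contains the a-successors of x, the worlds containing all
  a-consequents {b | a \<box>\<rightarrow> b \<in> x}; in particular a anchors |a|. R_A[x] is the set of
  a-successors of x if a anchors A, and A itself if A has no anchor. Two anchors a, b of A satisfy a \<box>\<rightarrow> b and b \<box>\<rightarrow> a at x,
  so by cut and cautious monotonicity they have the same consequents: R is well defined.
  If R_A[x] \<subseteq> B \<subseteq> A then every anchor of A anchors B, which makes the frame cautious;
  and (p \<and> (p \<box>\<rightarrow> q)) \<rightarrow> q makes x one of its own a-successors when a \<in> x. *)

abbreviation cond_mp_axiom :: fm where
  "cond_mp_axiom \<equiv> Imp (And vp (Cond vp vq)) vq"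

section \<open>Soundness\<close>

abbreviation truth_set :: "'w set \<Rightarrow> ('w \<Rightarrow> 'w \<Rightarrow> bool) \<Rightarrow> ('w set \<Rightarrow> 'w \<Rightarrow> 'w \<Rightarrow> bool) \<Rightarrow>
    (nat \<Rightarrow> 'w set) \<Rightarrow> fm \<Rightarrow> 'w set"
  where "truth_set X le R V a \<equiv> {z \<in> X. sat X le R V z a}"

lemma cframe_le_in: "cframe X le R \<Longrightarrow> le x y \<Longrightarrow> x \<in> X \<and> y \<in> X"
  unfolding cframe_def by simp

lemma cframe_refl: "cframe X le R \<Longrightarrow> x \<in> X \<Longrightarrow> le x x"
  unfolding cframe_def by simp

lemma cframe_trans: "cframe X le R \<Longrightarrow> le x y \<Longrightarrow> le y z \<Longrightarrow> le x z"
  unfolding cframe_def by (elim conjE) meson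

lemma cframe_R_in: "cframe X le R \<Longrightarrow> upset X le a \<Longrightarrow> R a x y \<Longrightarrow> x \<in> X \<and> y \<in> X"
  unfolding cframe_def by (elim conjE) (erule allE[of _ a], simp)

lemma cframe_le_R:
  "cframe X le R \<Longrightarrow> upset X le a \<Longrightarrow> le x y \<Longrightarrow> R a y z \<Longrightarrow> \<exists>w. R a x w \<and> le w z"
  unfolding cframe_def by (elim conjE) (erule allE[of _ a], simp)

lemma sat_persistent:
  assumes fr: "cframe X le R" and V: "valuation X le V"
  shows "le x y \<Longrightarrow> sat X le R V x a \<Longrightarrow> sat X le R V y a"
proof (induction a arbitrary: x y)
  case (Var p)
  then show ?case using V unfolding valuation_def upset_def by simp
next
  case Bot
  then show ?case by simp
next
  case (And a b)
  then show ?case by simp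
next
  case (Or a b)
  then show ?case by (simp only: sat.simps) blast
next
  case (Imp a b)
  then show ?case using cframe_trans[OF fr] by auto
next
  case (Cond a b)
  have up: "upset X le (truth_set X le R V a)"
    using Cond.IH(1) cframe_le_in[OF fr] unfolding upset_def by blast
  show ?case unfolding sat.simps
  proof (intro allI impI)
    fix z assume "R (truth_set X le R V a) y z"
    then obtain w where "R (truth_set X le R V a) x w" "le w z"
      using cframe_le_R[OF fr up Cond.prems(1)] by blast
    then show "sat X le R V z b" using Cond.prems(2) Cond.IH(2) by simp
  qed
qed

lemma upset_truth_set:
  assumes fr: "cframe X le R" and V: "valuation X le V"
  shows "upset X le (truth_set X le R V a)"
  using sat_persistent[OF fr V] cframe_le_in[OF fr] unfolding upset_def by blast

lemma sat_mp:
  "cframe X le R \<Longrightarrow> x \<in> X \<Longrightarrow> sat X le R V x (Imp a b) \<Longrightarrow> sat X le R V x a \<Longrightarrow>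
    sat X le R V x b"
  using cframe_refl by fastforce

lemma sat_Cond_iff_up_Rimg:
  assumes fr: "cframe X le R" and V: "valuation X le V"
  shows "sat X le R V x (Cond a b) \<longleftrightarrow>
    up le (Rimg R (truth_set X le R V a) x) \<subseteq> truth_set X le R V b"
proof
  assume x: "sat X le R V x (Cond a b)"
  show "up le (Rimg R (truth_set X le R V a) x) \<subseteq> truth_set X le R V b"
  proof
    fix z assume "z \<in> up le (Rimg R (truth_set X le R V a) x)"
    then obtain y where "R (truth_set X le R V a) x y" "le y z"
      unfolding up_def Rimg_def by blast
    then show "z \<in> truth_set X le R V b"
      using x sat_persistent[OF fr V] cframe_le_in[OF fr] by auto
  qed
next
  assume "up le (Rimg R (truth_set X le R V a) x) \<subseteq> truth_set X le R V b"
  moreover have "y \<in> up le (Rimg R (truth_set X le R V a) x)"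
    if "R (truth_set X le R V a) x y" for y
    using that cframe_R_in[OF fr upset_truth_set[OF fr V]] cframe_refl[OF fr]
    unfolding up_def Rimg_def by blast
  ultimately show "sat X le R V x (Cond a b)" by auto
qed

lemma sat_subst:
  assumes fr: "cframe X le R" and V: "valuation X le V" and x: "x \<in> X"
  shows "sat X le R V x (subst \<sigma> a) \<longleftrightarrow> sat X le R (\<lambda>p. truth_set X le R V (\<sigma> p)) x a"
  using x
proof (induction a arbitrary: x)
  case (Cond a b)
  let ?V' = "\<lambda>p. truth_set X le R V (\<sigma> p)"
  have eq: "truth_set X le R V (subst \<sigma> a) = truth_set X le R ?V' a"
    using Cond.IH(1) by blast
  have "R (truth_set X le R V (subst \<sigma> a)) x y \<Longrightarrow> y \<in> X" for y
    using cframe_R_in[OF fr upset_truth_set[OF fr V]] by blast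
  then have "(\<forall>y. R (truth_set X le R ?V' a) x y \<longrightarrow> sat X le R V y (subst \<sigma> b)) \<longleftrightarrow>
      (\<forall>y. R (truth_set X le R ?V' a) x y \<longrightarrow> sat X le R ?V' y b)"
    using Cond.IH(2) unfolding eq by blast
  then show ?case unfolding subst.simps sat.simps eq .
qed simp_all

lemma sat_IPC:
  assumes fr: "cframe X le R" and V: "valuation X le V"
  shows "a \<in> IPC \<Longrightarrow> x \<in> X \<Longrightarrow> sat X le R V x a"
proof (induction a arbitrary: x rule: IPC.induct)
  case (K a b)
  then show ?case using sat_persistent[OF fr V] by auto
next
  case (S a b c)
  then show ?case using cframe_refl[OF fr] cframe_trans[OF fr] cframe_le_in[OF fr]
    by (simp only: sat.simps) meson
next
  case (C3 a b)
  then show ?case using sat_persistent[OF fr V] by auto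
next
  case (D3 a c b)
  then show ?case using cframe_refl[OF fr] cframe_trans[OF fr] cframe_le_in[OF fr]
    by (simp only: sat.simps) meson
next
  case (MP a b)
  then show ?case using sat_mp[OF fr] by blast
qed simp_all

lemma valid_frame_Iff_truth_set_eq:
  assumes fr: "cframe X le R" and V: "valuation X le V" and "valid_frame X le R (Iff a b)"
  shows "truth_set X le R V a = truth_set X le R V b"
  using assms(3) V cframe_refl[OF fr] unfolding valid_frame_def Iff_def by auto

lemma valid_ICK:
  assumes fr: "cframe X le R" and \<Gamma>: "\<forall>g\<in>\<Gamma>. valid_frame X le R g"
  shows "a \<in> ICK \<Gamma> \<Longrightarrow> valid_frame X le R a"
proof (induction a rule: ICK.induct)
  case (ipc a)
  then show ?case using sat_IPC[OF fr] unfolding valid_frame_def by blast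
next
  case (extra a)
  then show ?case using \<Gamma> by blast
next
  case ax_and
  then show ?case unfolding valid_frame_def Iff_def by auto
next
  case ax_top
  then show ?case unfolding valid_frame_def Iff_def Top_def by auto
next
  case (sub a \<sigma>)
  show ?case unfolding valid_frame_def
  proof (intro allI impI ballI)
    fix V x assume V: "valuation X le V" and x: "x \<in> X"
    have "valuation X le (\<lambda>p. truth_set X le R V (\<sigma> p))"
      using upset_truth_set[OF fr V] unfolding valuation_def by blast
    then show "sat X le R V x (subst \<sigma> a)"
      using sub.IH x sat_subst[OF fr V x] unfolding valid_frame_def by blast
  qed
next
  case (mp a b)
  then show ?case using sat_mp[OF fr] unfolding valid_frame_def by blast
next
  case (cong_l a b c)
  then show ?case
    using valid_frame_Iff_truth_set_eq[OF fr] unfolding valid_frame_def Iff_def by auto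
next
  case (cong_r a b c)
  show ?case unfolding valid_frame_def
  proof (intro allI impI ballI)
    fix V x assume V: "valuation X le V" and x: "x \<in> X"
    have "sat X le R V y (Cond c a) \<longleftrightarrow> sat X le R V y (Cond c b)" for y
      using sat_Cond_iff_up_Rimg[OF fr V] valid_frame_Iff_truth_set_eq[OF fr V cong_r.IH] by simp
    then show "sat X le R V x (Iff (Cond c a) (Cond c b))" unfolding Iff_def by simp
  qed
qed

lemma cautious_frame_cframe: "cautious_frame X le R \<Longrightarrow> cframe X le R"
  unfolding cautious_frame_def by simp

lemma cautious_Rimg_subset:
  "cautious_frame X le R \<Longrightarrow> x \<in> X \<Longrightarrow> upset X le a \<Longrightarrow> Rimg R a x \<subseteq> a"
  unfolding cautious_frame_def by blast

lemma cautious_up_Rimg_eq: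
  "cautious_frame X le R \<Longrightarrow> x \<in> X \<Longrightarrow> upset X le a \<Longrightarrow> upset X le b \<Longrightarrow>
    Rimg R a x \<subseteq> b \<Longrightarrow> b \<subseteq> a \<Longrightarrow> up le (Rimg R a x) = up le (Rimg R b x)"
  unfolding cautious_frame_def by blast

lemma cautious_up_Rimg_Cond_eq:
  assumes cau: "cautious_frame X le R" and V: "valuation X le V" and x: "x \<in> X"
    and "sat X le R V x (Cond a b)"
  shows "up le (Rimg R (truth_set X le R V a) x) = up le (Rimg R (truth_set X le R V (And a b)) x)"
proof -
  note fr = cautious_frame_cframe[OF cau]
  have "Rimg R (truth_set X le R V a) x \<subseteq> truth_set X le R V a"
    by (rule cautious_Rimg_subset[OF cau x upset_truth_set[OF fr V]])
  then have "Rimg R (truth_set X le R V a) x \<subseteq> truth_set X le R V (And a b)"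
    using assms(4) unfolding Rimg_def by auto
  then show ?thesis
    by (rule cautious_up_Rimg_eq[OF cau x upset_truth_set[OF fr V] upset_truth_set[OF fr V]]) auto
qed

lemma sat_Cond_cut:
  assumes cau: "cautious_frame X le R" and V: "valuation X le V" and x: "x \<in> X"
    and "sat X le R V x (Cond a b)" and "sat X le R V x (Cond (And a b) c)"
  shows "sat X le R V x (Cond a c)"
  using assms(5)
  unfolding sat_Cond_iff_up_Rimg[OF cautious_frame_cframe[OF cau] V]
    cautious_up_Rimg_Cond_eq[OF cau V x assms(4)] .

lemma sat_Cond_cautious_mono:
  assumes cau: "cautious_frame X le R" and V: "valuation X le V" and x: "x \<in> X"
    and "sat X le R V x (Cond a b)" and "sat X le R V x (Cond a c)"
  shows "sat X le R V x (Cond (And a b) c)"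
  using assms(5)
  unfolding sat_Cond_iff_up_Rimg[OF cautious_frame_cframe[OF cau] V]
    cautious_up_Rimg_Cond_eq[OF cau V x assms(4)] .

lemma valid_iCC_axioms:
  assumes cau: "cautious_frame X le R" and "g \<in> iCC_axioms"
  shows "valid_frame X le R g"
  unfolding valid_frame_def
proof (intro allI impI ballI)
  fix V x assume V: "valuation X le V" and x: "x \<in> X"
  note fr = cautious_frame_cframe[OF cau]
  have "Rimg R (truth_set X le R V vp) x \<subseteq> truth_set X le R V vp"
    by (rule cautious_Rimg_subset[OF cau x upset_truth_set[OF fr V]])
  then have "sat X le R V x (Cond vp vp)" unfolding Rimg_def by auto
  moreover have "sat X le R V x (Imp (And (Cond vp vq) (Cond (And vp vq) vr)) (Cond vp vr))"
    unfolding sat.simps(3,5) using sat_Cond_cut[OF cau V] by blast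
  moreover have "sat X le R V x (Imp (And (Cond vp vq) (Cond vp vr)) (Cond (And vp vq) vr))"
    unfolding sat.simps(3,5) using sat_Cond_cautious_mono[OF cau V] by blast
  ultimately show "sat X le R V x g" using assms(2) unfolding iCC_axioms_def by blast
qed

lemma valid_cond_mp_axiom:
  assumes fr: "cframe X le R" and refl: "reflexive_cond X le R"
  shows "valid_frame X le R cond_mp_axiom"
  unfolding valid_frame_def
proof (intro allI impI ballI)
  fix V x assume V: "valuation X le V" and "x \<in> X"
  have "sat X le R V y vq" if "y \<in> X" "sat X le R V y vp" "sat X le R V y (Cond vp vq)" for y
  proof -
    have "y \<in> up le (Rimg R (truth_set X le R V vp) y)"
      using refl that(1,2) upset_truth_set[OF fr V] unfolding reflexive_cond_def by blast
    then show ?thesis using that(3) sat_Cond_iff_up_Rimg[OF fr V] by blast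
  qed
  then show "sat X le R V x cond_mp_axiom" by auto
qed

lemma iCCT_sound:
  assumes cau: "cautious_frame X le R" and refl: "reflexive_cond X le R" and "a \<in> iCCT"
  shows "valid_frame X le R a"
proof -
  note fr = cautious_frame_cframe[OF cau]
  have "\<forall>g\<in>iCC_axioms \<union> {cond_mp_axiom}. valid_frame X le R g"
    using valid_iCC_axioms[OF cau] valid_cond_mp_axiom[OF fr refl] by blast
  then show ?thesis using assms(3) valid_ICK[OF fr] unfolding iCCT_def by blast
qed

section \<open>Derivations and prime theories\<close>

lemmas ICK_K = IPC.K[THEN ICK.ipc]
lemmas ICK_S = IPC.S[THEN ICK.ipc]
lemmas ICK_conj1 = IPC.C1[THEN ICK.ipc]
lemmas ICK_conj2 = IPC.C2[THEN ICK.ipc]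
lemmas ICK_conjI = IPC.C3[THEN ICK.ipc]
lemmas ICK_disj1 = IPC.D1[THEN ICK.ipc]
lemmas ICK_disj2 = IPC.D2[THEN ICK.ipc]
lemmas ICK_disjE = IPC.D3[THEN ICK.ipc]
lemmas ICK_Bot = IPC.EFQ[THEN ICK.ipc]

definition inst3 :: "fm \<Rightarrow> fm \<Rightarrow> fm \<Rightarrow> nat \<Rightarrow> fm" where
  "inst3 a b c n = (if n = 0 then a else if n = 1 then b else c)"

lemma ICK_Cond_And: "Iff (Cond a (And b c)) (And (Cond a b) (Cond a c)) \<in> ICK \<Gamma>"
  using ICK.sub[OF ICK.ax_and, where \<sigma> = "inst3 a b c"] by (simp add: Iff_def inst3_def)

lemma ICK_Cond_Top: "Iff (Cond a Top) Top \<in> ICK \<Gamma>"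
  using ICK.sub[OF ICK.ax_top, where \<sigma> = "inst3 a a a"] by (simp add: Iff_def Top_def inst3_def)

lemma ICK_instance: "g \<in> \<Gamma> \<Longrightarrow> subst \<sigma> g \<in> ICK \<Gamma>"
  by (rule ICK.sub[OF ICK.extra])

lemma ICK_cond_mp_instance: "cond_mp_axiom \<in> \<Gamma> \<Longrightarrow> Imp (And a (Cond a b)) b \<in> ICK \<Gamma>"
  using ICK_instance[where \<sigma> = "inst3 a b b"] by (fastforce simp: inst3_def)

lemma ICK_I: "Imp a a \<in> ICK \<Gamma>"
  by (rule ICK.mp[OF ICK.mp[OF ICK_S ICK_K] ICK_K[where b = a]])

lemma ICK_conj: "a \<in> ICK \<Gamma> \<Longrightarrow> b \<in> ICK \<Gamma> \<Longrightarrow> And a b \<in> ICK \<Gamma>"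
  by (rule ICK.mp[OF ICK.mp[OF ICK_conjI]])

lemma ICK_IffI: "Imp a b \<in> ICK \<Gamma> \<Longrightarrow> Imp b a \<in> ICK \<Gamma> \<Longrightarrow> Iff a b \<in> ICK \<Gamma>"
  unfolding Iff_def by (rule ICK_conj)

lemma ICK_IffD1: "Iff a b \<in> ICK \<Gamma> \<Longrightarrow> Imp a b \<in> ICK \<Gamma>"
  unfolding Iff_def by (rule ICK.mp[OF ICK_conj1])

lemma ICK_IffD2: "Iff a b \<in> ICK \<Gamma> \<Longrightarrow> Imp b a \<in> ICK \<Gamma>"
  unfolding Iff_def by (rule ICK.mp[OF ICK_conj2])

inductive derives :: "fm set \<Rightarrow> fm set \<Rightarrow> fm \<Rightarrow> bool" for \<Gamma> G where
  logic: "a \<in> ICK \<Gamma> \<Longrightarrow> derives \<Gamma> G a"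
| hyp: "a \<in> G \<Longrightarrow> derives \<Gamma> G a"
| mp: "derives \<Gamma> G (Imp a b) \<Longrightarrow> derives \<Gamma> G a \<Longrightarrow> derives \<Gamma> G b"

lemma derives_ICK_mp: "Imp a b \<in> ICK \<Gamma> \<Longrightarrow> derives \<Gamma> G a \<Longrightarrow> derives \<Gamma> G b"
  by (rule derives.mp[OF derives.logic])

lemma derives_conj: "derives \<Gamma> G a \<Longrightarrow> derives \<Gamma> G b \<Longrightarrow> derives \<Gamma> G (And a b)"
  by (rule derives.mp[OF derives_ICK_mp[OF ICK_conjI]])

lemma derives_conjD1: "derives \<Gamma> G (And a b) \<Longrightarrow> derives \<Gamma> G a"
  by (rule derives_ICK_mp[OF ICK_conj1])

lemma derives_conjD2: "derives \<Gamma> G (And a b) \<Longrightarrow> derives \<Gamma> G b"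
  by (rule derives_ICK_mp[OF ICK_conj2])

lemma derives_mono: "derives \<Gamma> G a \<Longrightarrow> G \<subseteq> H \<Longrightarrow> derives \<Gamma> H a"
  by (induction rule: derives.induct) (auto intro: derives.intros)

lemma derives_deduction: "derives \<Gamma> (insert a G) b \<Longrightarrow> derives \<Gamma> G (Imp a b)"
proof (induction rule: derives.induct)
  case (logic c)
  then show ?case by (rule derives_ICK_mp[OF ICK_K derives.logic])
next
  case (hyp c)
  show ?case
  proof (cases "c = a")
    case True
    then show ?thesis using derives.logic[OF ICK_I] by simp
  next
    case False
    then show ?thesis using hyp derives_ICK_mp[OF ICK_K derives.hyp] by blast
  qed
next
  case (mp c d)
  then show ?case using derives.mp[OF derives_ICK_mp[OF ICK_S]] by blast
qed

lemma ICK_of_derives_empty: "derives \<Gamma> {} a \<Longrightarrow> a \<in> ICK \<Gamma>"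
  by (induction rule: derives.induct) (auto intro: ICK.mp)

lemma ICK_Imp_of_derives: "derives \<Gamma> {a} b \<Longrightarrow> Imp a b \<in> ICK \<Gamma>"
  using derives_deduction[of \<Gamma> a "{}" b] ICK_of_derives_empty by simp

lemma ICK_Imp_trans:
  assumes "Imp a b \<in> ICK \<Gamma>" and "Imp b c \<in> ICK \<Gamma>"
  shows "Imp a c \<in> ICK \<Gamma>"
  by (rule ICK_Imp_of_derives, rule derives_ICK_mp[OF assms(2) derives_ICK_mp[OF assms(1)]])
    (simp add: derives.hyp)

lemma ICK_conj_commute: "Imp (And a b) (And b a) \<in> ICK \<Gamma>"
  by (rule ICK_Imp_of_derives)
    (auto intro: derives_conj derives_conjD1 derives_conjD2 derives.hyp)

lemma ICK_mp_conj: "Imp (And (Imp a b) a) b \<in> ICK \<Gamma>"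
proof (rule ICK_Imp_of_derives)
  have "derives \<Gamma> {And (Imp a b) a} (And (Imp a b) a)" by (simp add: derives.hyp)
  then show "derives \<Gamma> {And (Imp a b) a} b" using derives.mp derives_conjD1 derives_conjD2 by blast
qed

lemma ICK_Cond_mono: "Imp b c \<in> ICK \<Gamma> \<Longrightarrow> Imp (Cond a b) (Cond a c) \<in> ICK \<Gamma>"
proof -
  assume bc: "Imp b c \<in> ICK \<Gamma>"
  have "Imp b (And b c) \<in> ICK \<Gamma>"
    by (rule ICK_Imp_of_derives) (auto intro: derives_conj derives_ICK_mp[OF bc] derives.hyp)
  then have "Iff b (And b c) \<in> ICK \<Gamma>" using ICK_IffI ICK_conj1 by blast
  then have "Imp (Cond a b) (Cond a (And b c)) \<in> ICK \<Gamma>" by (rule ICK_IffD1[OF ICK.cong_r])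
  then show ?thesis
    using ICK_Imp_trans ICK_IffD1[OF ICK_Cond_And] ICK_conj2 by blast
qed

lemma ICK_Cond_nec: "b \<in> ICK \<Gamma> \<Longrightarrow> Cond a b \<in> ICK \<Gamma>"
proof -
  assume b: "b \<in> ICK \<Gamma>"
  have "Imp (Cond a Top) (Cond a b) \<in> ICK \<Gamma>" by (rule ICK_Cond_mono[OF ICK.mp[OF ICK_K b]])
  moreover have "Top \<in> ICK \<Gamma>" unfolding Top_def by (rule ICK_I)
  then have "Cond a Top \<in> ICK \<Gamma>" by (rule ICK.mp[OF ICK_IffD2[OF ICK_Cond_Top]])
  ultimately show ?thesis by (rule ICK.mp)
qed

lemma ICK_Cond_conj_commute: "Imp (Cond (And a b) c) (Cond (And b a) c) \<in> ICK \<Gamma>"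
  by (rule ICK_IffD1[OF ICK.cong_l[OF ICK_IffI[OF ICK_conj_commute ICK_conj_commute]]])

definition prime_theory :: "fm set \<Rightarrow> fm set \<Rightarrow> bool" where
  "prime_theory \<Gamma> G \<longleftrightarrow> (\<forall>a. derives \<Gamma> G a \<longrightarrow> a \<in> G) \<and> Bot \<notin> G \<and>
     (\<forall>a b. Or a b \<in> G \<longrightarrow> a \<in> G \<or> b \<in> G)"

lemma prime_theory_derives: "prime_theory \<Gamma> G \<Longrightarrow> derives \<Gamma> G a \<Longrightarrow> a \<in> G"
  unfolding prime_theory_def by blast

lemma prime_theory_ICK: "prime_theory \<Gamma> G \<Longrightarrow> a \<in> ICK \<Gamma> \<Longrightarrow> a \<in> G"
  by (rule prime_theory_derives[OF _ derives.logic])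

lemma prime_theory_mp: "prime_theory \<Gamma> G \<Longrightarrow> Imp a b \<in> G \<Longrightarrow> a \<in> G \<Longrightarrow> b \<in> G"
  by (rule prime_theory_derives[OF _ derives.mp[OF derives.hyp derives.hyp]])

lemma prime_theory_ICK_mp: "prime_theory \<Gamma> G \<Longrightarrow> Imp a b \<in> ICK \<Gamma> \<Longrightarrow> a \<in> G \<Longrightarrow> b \<in> G"
  by (rule prime_theory_derives[OF _ derives_ICK_mp[OF _ derives.hyp]])

lemma prime_theory_And: "prime_theory \<Gamma> G \<Longrightarrow> And a b \<in> G \<longleftrightarrow> a \<in> G \<and> b \<in> G"
  using prime_theory_ICK_mp[OF _ ICK_conj1] prime_theory_ICK_mp[OF _ ICK_conj2]
    prime_theory_mp[OF _ prime_theory_ICK_mp[OF _ ICK_conjI]] by blast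

lemma prime_theory_Or: "prime_theory \<Gamma> G \<Longrightarrow> Or a b \<in> G \<longleftrightarrow> a \<in> G \<or> b \<in> G"
  using prime_theory_ICK_mp[OF _ ICK_disj1] prime_theory_ICK_mp[OF _ ICK_disj2]
  unfolding prime_theory_def by blast

lemma prime_theory_Bot: "prime_theory \<Gamma> G \<Longrightarrow> Bot \<notin> G"
  unfolding prime_theory_def by blast

lemma derives_Union_chain:
  "derives \<Gamma> (\<Union>C) a \<Longrightarrow> C \<noteq> {} \<Longrightarrow> chain\<^sub>\<subseteq> C \<Longrightarrow> \<exists>D\<in>C. derives \<Gamma> D a"
proof (induction rule: derives.induct)
  case (logic a)
  then show ?case using derives.logic by blast
next
  case (hyp a)
  then show ?case using derives.hyp by blast
next
  case (mp a b)
  obtain D1 where D1: "D1 \<in> C" "derives \<Gamma> D1 (Imp a b)" using mp by blast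
  obtain D2 where D2: "D2 \<in> C" "derives \<Gamma> D2 a" using mp by blast
  have "D1 \<subseteq> D2 \<or> D2 \<subseteq> D1" using mp.prems(2) D1(1) D2(1) unfolding chain_subset_def by blast
  then show ?case
  proof
    assume "D1 \<subseteq> D2"
    then show ?thesis using D2 derives.mp[OF derives_mono[OF D1(2)]] by blast
  next
    assume "D2 \<subseteq> D1"
    then show ?thesis using D1 derives.mp[OF _ derives_mono[OF D2(2)]] by blast
  qed
qed

lemma prime_theory_if_maximal:
  assumes nd: "\<not> derives \<Gamma> M a" and max: "\<And>b. b \<notin> M \<Longrightarrow> derives \<Gamma> M (Imp b a)"
  shows "prime_theory \<Gamma> M"
  unfolding prime_theory_def
proof (intro conjI allI impI)
  fix b assume b: "derives \<Gamma> M b"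
  show "b \<in> M"
  proof (rule ccontr)
    assume "b \<notin> M"
    then show False using nd derives.mp[OF max b] by blast
  qed
next
  show "Bot \<notin> M" using nd derives_ICK_mp[OF ICK_Bot derives.hyp] by blast
next
  fix b c assume bc: "Or b c \<in> M"
  show "b \<in> M \<or> c \<in> M"
  proof (rule ccontr)
    assume "\<not> (b \<in> M \<or> c \<in> M)"
    then have "derives \<Gamma> M (Imp b a)" "derives \<Gamma> M (Imp c a)" using max by blast+
    then have "derives \<Gamma> M a"
      using derives.mp[OF derives.mp[OF derives_ICK_mp[OF ICK_disjE]] derives.hyp[OF bc]] by blast
    then show False using nd by blast
  qed
qed

lemma lindenbaum:
  assumes "\<not> derives \<Gamma> G a"
  obtains D where "G \<subseteq> D" "prime_theory \<Gamma> D" "a \<notin> D"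
proof -
  let ?A = "{D. G \<subseteq> D \<and> \<not> derives \<Gamma> D a}"
  have "\<forall>C\<in>chains ?A. \<exists>U\<in>?A. \<forall>X\<in>C. X \<subseteq> U"
  proof
    fix C assume C: "C \<in> chains ?A"
    show "\<exists>U\<in>?A. \<forall>X\<in>C. X \<subseteq> U"
    proof (cases "C = {}")
      case True
      then show ?thesis using assms by blast
    next
      case False
      have chain: "chain\<^sub>\<subseteq> C" and sub: "C \<subseteq> ?A" using C unfolding chains_def by blast+
      have "\<not> derives \<Gamma> (\<Union>C) a"
        using derives_Union_chain[OF _ False chain] sub by blast
      moreover have "G \<subseteq> \<Union>C" using False sub by blast
      ultimately show ?thesis by blast
    qed
  qed
  then obtain M where M: "M \<in> ?A" and M_max: "\<forall>X\<in>?A. M \<subseteq> X \<longrightarrow> X = M"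
    using Zorn_Lemma2[of ?A] by blast
  have "derives \<Gamma> M (Imp b a)" if "b \<notin> M" for b
  proof -
    have "insert b M \<notin> ?A" using M M_max that by blast
    then show ?thesis using M by (blast intro: derives_deduction)
  qed
  then have "prime_theory \<Gamma> M" using M prime_theory_if_maximal by blast
  moreover have "a \<notin> M" using M derives.hyp by blast
  ultimately show ?thesis using M that by blast
qed

section \<open>The canonical model\<close>

locale iCC_extension =
  fixes \<Gamma> :: "fm set"
  assumes iCC_axioms_subset: "iCC_axioms \<subseteq> \<Gamma>"
begin

lemma ICK_Cond_refl: "Cond a a \<in> ICK \<Gamma>"
  using ICK_instance[of "Cond vp vp" \<Gamma> "inst3 a a a"] iCC_axioms_subset
  by (simp add: iCC_axioms_def inst3_def)

lemma ICK_Cond_cut: "Imp (And (Cond a b) (Cond (And a b) c)) (Cond a c) \<in> ICK \<Gamma>"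
  using ICK_instance[of "Imp (And (Cond vp vq) (Cond (And vp vq) vr)) (Cond vp vr)" \<Gamma> "inst3 a b c"]
    iCC_axioms_subset
  by (simp add: iCC_axioms_def inst3_def)

lemma ICK_Cond_cautious_mono: "Imp (And (Cond a b) (Cond a c)) (Cond (And a b) c) \<in> ICK \<Gamma>"
  using ICK_instance[of "Imp (And (Cond vp vq) (Cond vp vr)) (Cond (And vp vq) vr)" \<Gamma> "inst3 a b c"]
    iCC_axioms_subset
  by (simp add: iCC_axioms_def inst3_def)

text \<open>The completeness claim concerns frames on \<open>fm set set\<close>; a world \<open>x\<close> stands for the
  prime theory \<open>\<Union>x\<close>, for instance \<open>x = {D}\<close>.\<close>

definition canonical_worlds :: "fm set set set" where
  "canonical_worlds = {x. prime_theory \<Gamma> (\<Union>x)}"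

definition canonical_le :: "fm set set \<Rightarrow> fm set set \<Rightarrow> bool" where
  "canonical_le x y \<longleftrightarrow> x \<in> canonical_worlds \<and> y \<in> canonical_worlds \<and> \<Union>x \<subseteq> \<Union>y"

definition proof_set :: "fm \<Rightarrow> fm set set set" where
  "proof_set a = {x \<in> canonical_worlds. a \<in> \<Union>x}"

definition canonical_val :: "nat \<Rightarrow> fm set set set" where
  "canonical_val p = proof_set (Var p)"

definition Cond_consequents :: "fm set set \<Rightarrow> fm \<Rightarrow> fm set" where
  "Cond_consequents x a = {b. Cond a b \<in> \<Union>x}"

definition Cond_successors :: "fm set set \<Rightarrow> fm \<Rightarrow> fm set set set" where
  "Cond_successors x a = {y \<in> canonical_worlds. Cond_consequents x a \<subseteq> \<Union>y}"

definition anchor :: "fm set set \<Rightarrow> fm set set set \<Rightarrow> fm \<Rightarrow> bool" where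
  "anchor x A a \<longleftrightarrow> A \<subseteq> proof_set a \<and> Cond_successors x a \<subseteq> A"

text \<open>All anchors of \<open>A\<close> at \<open>x\<close> have the same successors (\<open>Cond_successors_anchor_eq\<close>), so
  \<open>R_A[x]\<close> is those successors if \<open>A\<close> has an anchor, and \<open>A\<close> itself otherwise.\<close>

definition canonical_R :: "fm set set set \<Rightarrow> fm set set \<Rightarrow> fm set set \<Rightarrow> bool" where
  "canonical_R A x y \<longleftrightarrow> x \<in> canonical_worlds \<and> y \<in> canonical_worlds \<and> y \<in> A \<and>
     (\<forall>a. anchor x A a \<longrightarrow> y \<in> Cond_successors x a)"

lemma singleton_in_canonical_worlds: "prime_theory \<Gamma> D \<Longrightarrow> {D} \<in> canonical_worlds"
  unfolding canonical_worlds_def by simp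

lemma prime_theory_world: "x \<in> canonical_worlds \<Longrightarrow> prime_theory \<Gamma> (\<Union>x)"
  unfolding canonical_worlds_def by simp

lemma Cond_consequents_derives:
  assumes x: "x \<in> canonical_worlds"
  shows "derives \<Gamma> (Cond_consequents x a) b \<Longrightarrow> b \<in> Cond_consequents x a"
proof (induction rule: derives.induct)
  case (logic c)
  then show ?case
    unfolding Cond_consequents_def using prime_theory_ICK[OF prime_theory_world[OF x] ICK_Cond_nec] by blast
next
  case (hyp c)
  then show ?case .
next
  case (mp c d)
  note pt = prime_theory_world[OF x]
  have "And (Cond a (Imp c d)) (Cond a c) \<in> \<Union>x"
    using mp.IH prime_theory_And[OF pt] unfolding Cond_consequents_def by blast
  then have "Cond a (And (Imp c d) c) \<in> \<Union>x"
    by (rule prime_theory_ICK_mp[OF pt ICK_IffD2[OF ICK_Cond_And]])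
  then show ?case
    unfolding Cond_consequents_def mem_Collect_eq
    by (rule prime_theory_ICK_mp[OF pt ICK_Cond_mono[OF ICK_mp_conj]])
qed

lemma Cond_successors_separate:
  assumes x: "x \<in> canonical_worlds" and "Cond a b \<notin> \<Union>x"
  obtains y where "y \<in> Cond_successors x a" "b \<notin> \<Union>y"
proof -
  have "\<not> derives \<Gamma> (Cond_consequents x a) b"
    using Cond_consequents_derives[OF x] assms(2) unfolding Cond_consequents_def by blast
  then obtain D where "Cond_consequents x a \<subseteq> D" "prime_theory \<Gamma> D" "b \<notin> D"
    by (rule lindenbaum)
  then show ?thesis using that[of "{D}"] singleton_in_canonical_worlds
    unfolding Cond_successors_def by simp
qed

lemma Cond_successors_subset_proof_set_iff:
  assumes x: "x \<in> canonical_worlds"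
  shows "Cond_successors x a \<subseteq> proof_set b \<longleftrightarrow> Cond a b \<in> \<Union>x"
proof
  assume sub: "Cond_successors x a \<subseteq> proof_set b"
  show "Cond a b \<in> \<Union>x"
  proof (rule ccontr)
    assume "Cond a b \<notin> \<Union>x"
    then obtain y where "y \<in> Cond_successors x a" "b \<notin> \<Union>y"
      by (rule Cond_successors_separate[OF x])
    then show False using sub unfolding proof_set_def by blast
  qed
next
  assume "Cond a b \<in> \<Union>x"
  then show "Cond_successors x a \<subseteq> proof_set b"
    unfolding Cond_successors_def Cond_consequents_def proof_set_def by blast
qed

lemma Cond_swap_antecedent:
  assumes x: "x \<in> canonical_worlds"
    and "Cond a b \<in> \<Union>x" and "Cond b a \<in> \<Union>x" and "Cond a c \<in> \<Union>x"
  shows "Cond b c \<in> \<Union>x"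
proof -
  note pt = prime_theory_world[OF x]
  have "Cond (And a b) c \<in> \<Union>x"
    using assms(2,4) prime_theory_ICK_mp[OF pt ICK_Cond_cautious_mono] prime_theory_And[OF pt] by blast
  then have "Cond (And b a) c \<in> \<Union>x" by (rule prime_theory_ICK_mp[OF pt ICK_Cond_conj_commute])
  then show ?thesis
    using assms(3) prime_theory_ICK_mp[OF pt ICK_Cond_cut] prime_theory_And[OF pt] by blast
qed

lemma Cond_successors_anchor_eq:
  assumes x: "x \<in> canonical_worlds" and "anchor x A a" and "anchor x A b"
  shows "Cond_successors x a = Cond_successors x b"
proof -
  have ab: "Cond a b \<in> \<Union>x" and ba: "Cond b a \<in> \<Union>x"
    using Cond_successors_subset_proof_set_iff[OF x] assms(2,3) unfolding anchor_def by blast+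
  have "Cond_consequents x a = Cond_consequents x b"
    unfolding Cond_consequents_def using Cond_swap_antecedent[OF x ab ba] Cond_swap_antecedent[OF x ba ab]
    by blast
  then show ?thesis unfolding Cond_successors_def by simp
qed

lemma Rimg_canonical_R_anchor:
  assumes x: "x \<in> canonical_worlds" and an: "anchor x A a"
  shows "Rimg canonical_R A x = Cond_successors x a"
proof
  show "Rimg canonical_R A x \<subseteq> Cond_successors x a"
    using an unfolding Rimg_def canonical_R_def by blast
next
  have "Cond_successors x a \<subseteq> A \<inter> canonical_worlds"
    using an unfolding anchor_def Cond_successors_def by blast
  then show "Cond_successors x a \<subseteq> Rimg canonical_R A x"
    using x Cond_successors_anchor_eq[OF x an] unfolding Rimg_def canonical_R_def by blast
qed

lemma Rimg_canonical_R_no_anchor: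
  "x \<in> canonical_worlds \<Longrightarrow> A \<subseteq> canonical_worlds \<Longrightarrow> \<nexists>a. anchor x A a \<Longrightarrow> Rimg canonical_R A x = A"
  unfolding Rimg_def canonical_R_def by blast

lemma anchor_proof_set: "x \<in> canonical_worlds \<Longrightarrow> anchor x (proof_set a) a"
  unfolding anchor_def Cond_successors_def proof_set_def Cond_consequents_def
  using prime_theory_ICK[OF prime_theory_world ICK_Cond_refl] by blast

lemma prime_extension_refuting_Imp:
  assumes x: "x \<in> canonical_worlds" and "Imp a b \<notin> \<Union>x"
  obtains y where "canonical_le x y" "a \<in> \<Union>y" "b \<notin> \<Union>y"
proof -
  have "\<not> derives \<Gamma> (insert a (\<Union>x)) b"
    using derives_deduction prime_theory_derives[OF prime_theory_world[OF x]] assms(2) by blast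
  then obtain D where "insert a (\<Union>x) \<subseteq> D" "prime_theory \<Gamma> D" "b \<notin> D"
    by (rule lindenbaum)
  then show ?thesis
    using that[of "{D}"] x singleton_in_canonical_worlds unfolding canonical_le_def by simp
qed

abbreviation canonical_sat :: "fm set set \<Rightarrow> fm \<Rightarrow> bool" where
  "canonical_sat \<equiv> sat canonical_worlds canonical_le canonical_R canonical_val"

lemma canonical_truth: "x \<in> canonical_worlds \<Longrightarrow> canonical_sat x a \<longleftrightarrow> a \<in> \<Union>x"
proof (induction a arbitrary: x)
  case (Var p)
  then show ?case unfolding canonical_val_def proof_set_def by simp
next
  case Bot
  then show ?case using prime_theory_Bot[OF prime_theory_world] by simp
next
  case (And a b)
  then show ?case using prime_theory_And[OF prime_theory_world] by simp
next
  case (Or a b)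
  then show ?case using prime_theory_Or[OF prime_theory_world] by simp
next
  case (Imp a b)
  show ?case
  proof
    assume sat: "canonical_sat x (Imp a b)"
    show "Imp a b \<in> \<Union>x"
    proof (rule ccontr)
      assume "Imp a b \<notin> \<Union>x"
      then obtain y where "canonical_le x y" "a \<in> \<Union>y" "b \<notin> \<Union>y"
        by (rule prime_extension_refuting_Imp[OF Imp.prems])
      then show False using sat Imp.IH unfolding canonical_le_def by auto
    qed
  next
    assume ab: "Imp a b \<in> \<Union>x"
    show "canonical_sat x (Imp a b)" unfolding sat.simps
    proof (intro ballI impI)
      fix y assume y: "y \<in> canonical_worlds" and "canonical_le x y" and "canonical_sat y a"
      then have "Imp a b \<in> \<Union>y" and "a \<in> \<Union>y"
        using ab Imp.IH(1)[OF y] unfolding canonical_le_def by auto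
      then show "canonical_sat y b"
        using Imp.IH(2)[OF y] prime_theory_mp[OF prime_theory_world[OF y]] by blast
    qed
  qed
next
  case (Cond a b)
  have "truth_set canonical_worlds canonical_le canonical_R canonical_val a = proof_set a"
    using Cond.IH(1) unfolding proof_set_def by auto
  moreover have "Rimg canonical_R (proof_set a) x = Cond_successors x a"
    by (rule Rimg_canonical_R_anchor[OF Cond.prems anchor_proof_set[OF Cond.prems]])
  ultimately have "canonical_sat x (Cond a b) \<longleftrightarrow> (\<forall>y\<in>Cond_successors x a. canonical_sat y b)"
    unfolding Rimg_def by auto
  also have "\<dots> \<longleftrightarrow> Cond_successors x a \<subseteq> proof_set b"
    using Cond.IH(2) unfolding Cond_successors_def proof_set_def by auto
  also have "\<dots> \<longleftrightarrow> Cond a b \<in> \<Union>x"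
    by (rule Cond_successors_subset_proof_set_iff[OF Cond.prems])
  finally show ?case .
qed

lemma canonical_R_antimono:
  assumes "canonical_le x y" and "canonical_R A y z"
  shows "canonical_R A x z"
proof -
  have "\<Union>x \<subseteq> \<Union>y" using assms(1) unfolding canonical_le_def by simp
  then have "Cond_successors y a \<subseteq> Cond_successors x a" and "anchor x A a \<Longrightarrow> anchor y A a" for a
    unfolding anchor_def Cond_successors_def Cond_consequents_def by blast+
  then show ?thesis using assms unfolding canonical_R_def canonical_le_def by blast
qed

lemma canonical_cframe:
  assumes "canonical_worlds \<noteq> {}"
  shows "cframe canonical_worlds canonical_le canonical_R"
  unfolding cframe_def
proof (intro conjI allI impI ballI)
  fix A x y z assume "canonical_le x y" and "canonical_R A y z"
  then have "canonical_R A x z \<and> canonical_le z z"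
    using canonical_R_antimono unfolding canonical_R_def canonical_le_def by blast
  then show "\<exists>w. canonical_R A x w \<and> canonical_le w z" by blast
qed (use assms in \<open>simp_all add: canonical_le_def canonical_R_def, blast\<close>)

lemma Rimg_canonical_R_eq:
  assumes x: "x \<in> canonical_worlds" and A: "A \<subseteq> canonical_worlds"
    and "Rimg canonical_R A x \<subseteq> B" and "B \<subseteq> A"
  shows "Rimg canonical_R A x = Rimg canonical_R B x"
proof (cases "\<exists>a. anchor x A a")
  case True
  then obtain a where an: "anchor x A a" by blast
  then have "Rimg canonical_R A x = Cond_successors x a" by (rule Rimg_canonical_R_anchor[OF x])
  moreover have "anchor x B a" using an assms(3,4) calculation unfolding anchor_def by blast
  ultimately show ?thesis using Rimg_canonical_R_anchor[OF x] by simp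
next
  case False
  then have "Rimg canonical_R A x = A" by (rule Rimg_canonical_R_no_anchor[OF x A])
  then show ?thesis using assms(3,4) by simp
qed

lemma canonical_cautious_frame:
  assumes "canonical_worlds \<noteq> {}"
  shows "cautious_frame canonical_worlds canonical_le canonical_R"
  unfolding cautious_frame_def
proof (intro conjI canonical_cframe[OF assms] ballI allI impI)
  fix x A assume "upset canonical_worlds canonical_le A"
  show "Rimg canonical_R A x \<subseteq> A" unfolding Rimg_def canonical_R_def by blast
next
  fix x A B assume x: "x \<in> canonical_worlds" and "upset canonical_worlds canonical_le A"
    and "Rimg canonical_R A x \<subseteq> B \<and> B \<subseteq> A"
  then have "Rimg canonical_R A x = Rimg canonical_R B x"
    using Rimg_canonical_R_eq[OF x] unfolding upset_def by blast
  then show "up canonical_le (Rimg canonical_R A x) = up canonical_le (Rimg canonical_R B x)" by simp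
qed

lemma canonical_reflexive_cond:
  assumes T: "cond_mp_axiom \<in> \<Gamma>"
  shows "reflexive_cond canonical_worlds canonical_le canonical_R"
  unfolding reflexive_cond_def
proof (intro ballI allI impI)
  fix x A assume x: "x \<in> canonical_worlds" and "upset canonical_worlds canonical_le A" and "x \<in> A"
  have "x \<in> Cond_successors x a" if "anchor x A a" for a
  proof -
    note pt = prime_theory_world[OF x]
    have "a \<in> \<Union>x" using that \<open>x \<in> A\<close> unfolding anchor_def proof_set_def by blast
    then have "Cond_consequents x a \<subseteq> \<Union>x"
      unfolding Cond_consequents_def
      using prime_theory_ICK_mp[OF pt ICK_cond_mp_instance[OF T]] prime_theory_And[OF pt] by blast
    then show ?thesis using x unfolding Cond_successors_def by simp
  qed
  then have "canonical_R A x x" using x \<open>x \<in> A\<close> unfolding canonical_R_def by blast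
  then show "x \<in> up canonical_le (Rimg canonical_R A x)"
    using x unfolding up_def Rimg_def canonical_le_def by blast
qed

lemma canonical_countermodel:
  assumes "a \<notin> ICK \<Gamma>"
  shows "canonical_worlds \<noteq> {}" and "\<not> valid_frame canonical_worlds canonical_le canonical_R a"
proof -
  have "\<not> derives \<Gamma> {} a" using assms ICK_of_derives_empty by blast
  then obtain D where D: "prime_theory \<Gamma> D" "a \<notin> D" by (rule lindenbaum)
  from D(1) have world: "{D} \<in> canonical_worlds" by (rule singleton_in_canonical_worlds)
  then show "canonical_worlds \<noteq> {}" by blast
  have "valuation canonical_worlds canonical_le canonical_val"
    unfolding valuation_def canonical_val_def upset_def proof_set_def canonical_le_def by blast
  moreover have "\<not> canonical_sat {D} a" using canonical_truth[OF world] D(2) by simp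
  ultimately show "\<not> valid_frame canonical_worlds canonical_le canonical_R a"
    using world unfolding valid_frame_def by blast
qed

lemma ICK_complete:
  assumes T: "cond_mp_axiom \<in> \<Gamma>" and valid: "valid_class TYPE(fm set set) a"
  shows "a \<in> ICK \<Gamma>"
proof (rule ccontr)
  assume "a \<notin> ICK \<Gamma>"
  note countermodel = canonical_countermodel[OF this]
  have "cautious_frame canonical_worlds canonical_le canonical_R"
    by (rule canonical_cautious_frame[OF countermodel(1)])
  moreover have "reflexive_cond canonical_worlds canonical_le canonical_R"
    by (rule canonical_reflexive_cond[OF T])
  ultimately show False
    using valid[unfolded valid_class_def, rule_format] countermodel(2) by blast
qed

end

interpretation iCCT: iCC_extension "iCC_axioms \<union> {cond_mp_axiom}"
  by unfold_locales blast

theorem theorem6p10: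
  shows "(\<phi> \<in> iCCT \<longrightarrow> valid_class TYPE('w) \<phi>) \<and>
         (valid_class TYPE(fm set set) \<phi> \<longrightarrow> \<phi> \<in> iCCT)"
proof (intro conjI impI)
  show "valid_class TYPE('w) \<phi>" if "\<phi> \<in> iCCT"
    using iCCT_sound that unfolding valid_class_def by blast
  show "\<phi> \<in> iCCT" if "valid_class TYPE(fm set set) \<phi>"
    unfolding iCCT_def by (rule iCCT.ICK_complete[OF _ that]) simp
qed

end
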